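(* Let $T$ be a tree with positive edge weights rooted at the homebase $r$, and let $q\ge 0$. In every cost-optimal strategy exploring $T$, if an agent enters a subtree $T_v$ (for a vertex $v$), then it explores (i.e., is the first to visit) at least one leaf of $T_v$.
   Context: Exploration model: given a connected graph with positive edge weights, a homebase vertex, and invoking cost $q\ge 0$, a strategy is a sequence of moves, each either invoking a new agent (appearing at the homebase) or an agent traversing an edge incident to its current vertex. A vertex is explored when first visited; the strategy explores the graph when every vertex has been visited by some agent (agents need not return). With $k$ agents, agent $i$ traversing total distance $d_i$ (weights counted with multiplicity), the cost is $kq+\sum_i d_i$; a strategy is cost-optimal if it explores the graph with minimum cost (off-line setting, graph known). For a rooted tree, $T_v$ denotes the subtree consisting of $v$ and its descendants; a leaf is a non-root vertex with no children. *)

theory Defs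
  imports Complex_Main
begin

definition graph :: "'a set \<Rightarrow> 'a set set \<Rightarrow> bool" where
  "graph V E \<longleftrightarrow> finite V \<and> (\<forall>e\<in>E. \<exists>x y. x \<in> V \<and> y \<in> V \<and> x \<noteq> y \<and> e = {x, y})"

definition walk :: "'a set set \<Rightarrow> 'a list \<Rightarrow> bool" where
  "walk E p \<longleftrightarrow> p \<noteq> [] \<and> (\<forall>i. Suc i < length p \<longrightarrow> {p ! i, p ! Suc i} \<in> E)"

definition connected_graph :: "'a set \<Rightarrow> 'a set set \<Rightarrow> bool" where
  "connected_graph V E \<longleftrightarrow>
     (\<forall>x\<in>V. \<forall>y\<in>V. \<exists>p. walk E p \<and> hd p = x \<and> last p = y)"

definition has_cycle :: "'a set set \<Rightarrow> bool" where
  "has_cycle E \<longleftrightarrow> (\<exists>p. walk E p \<and> distinct p \<and> length p \<ge> 3 \<and> {last p, hd p} \<in> E)"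

definition tree :: "'a set \<Rightarrow> 'a set set \<Rightarrow> bool" where
  "tree V E \<longleftrightarrow> graph V E \<and> V \<noteq> {} \<and> connected_graph V E \<and> \<not> has_cycle E"

text \<open>Subtree T_v of the tree rooted at r: v and its descendants, i.e. the vertices u
such that v lies on (every) path from r to u.\<close>

definition subtree :: "'a set \<Rightarrow> 'a set set \<Rightarrow> 'a \<Rightarrow> 'a \<Rightarrow> 'a set" where
  "subtree V E r v = {u \<in> V. \<forall>p. walk E p \<and> hd p = r \<and> last p = u \<longrightarrow> v \<in> set p}"

definition children :: "'a set \<Rightarrow> 'a set set \<Rightarrow> 'a \<Rightarrow> 'a \<Rightarrow> 'a set" where
  "children V E r v = {c. {v, c} \<in> E \<and> c \<in> subtree V E r v \<and> c \<noteq> v}"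

definition is_leaf :: "'a set \<Rightarrow> 'a set set \<Rightarrow> 'a \<Rightarrow> 'a \<Rightarrow> bool" where
  "is_leaf V E r u \<longleftrightarrow> u \<in> V \<and> u \<noteq> r \<and> children V E r u = {}"

text \<open>A move either invokes a new agent (appearing at the homebase) or lets agent i
(agents numbered 0,1,... in invocation order) traverse an edge to vertex u.\<close>

datatype 'a move = Invoke | Traverse nat 'a

fun step :: "'a \<Rightarrow> 'a list \<Rightarrow> 'a move \<Rightarrow> 'a list" where
  "step r pos Invoke = pos @ [r]"
| "step r pos (Traverse i u) = pos[i := u]"

definition pos_after :: "'a \<Rightarrow> 'a move list \<Rightarrow> nat \<Rightarrow> 'a list" where
  "pos_after r ms k = foldl (step r) [] (take k ms)"

fun valid_move :: "'a set set \<Rightarrow> 'a list \<Rightarrow> 'a move \<Rightarrow> bool" where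
  "valid_move E pos Invoke = True"
| "valid_move E pos (Traverse i u) = (i < length pos \<and> {pos ! i, u} \<in> E)"

definition valid_strategy :: "'a set set \<Rightarrow> 'a \<Rightarrow> 'a move list \<Rightarrow> bool" where
  "valid_strategy E r ms \<longleftrightarrow> (\<forall>k < length ms. valid_move E (pos_after r ms k) (ms ! k))"

definition visited :: "'a \<Rightarrow> 'a move list \<Rightarrow> nat \<Rightarrow> 'a set" where
  "visited r ms k = (\<Union>j\<le>k. set (pos_after r ms j))"

definition explores_graph :: "'a set \<Rightarrow> 'a \<Rightarrow> 'a move list \<Rightarrow> bool" where
  "explores_graph V r ms \<longleftrightarrow> V \<subseteq> visited r ms (length ms)"

definition num_agents :: "'a move list \<Rightarrow> nat" where
  "num_agents ms = length (filter (\<lambda>m. m = Invoke) ms)"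

definition total_distance :: "('a set \<Rightarrow> real) \<Rightarrow> 'a \<Rightarrow> 'a move list \<Rightarrow> real" where
  "total_distance w r ms =
     (\<Sum>k<length ms. (case ms ! k of Invoke \<Rightarrow> 0
                       | Traverse i u \<Rightarrow> w {pos_after r ms k ! i, u}))"

definition cost :: "real \<Rightarrow> ('a set \<Rightarrow> real) \<Rightarrow> 'a \<Rightarrow> 'a move list \<Rightarrow> real" where
  "cost q w r ms = q * real (num_agents ms) + total_distance w r ms"

definition cost_optimal ::
  "'a set \<Rightarrow> 'a set set \<Rightarrow> ('a set \<Rightarrow> real) \<Rightarrow> 'a \<Rightarrow> real \<Rightarrow> 'a move list \<Rightarrow> bool" where
  "cost_optimal V E w r q ms \<longleftrightarrow>
     valid_strategy E r ms \<and> explores_graph V r ms \<and>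
     (\<forall>ms'. valid_strategy E r ms' \<and> explores_graph V r ms' \<longrightarrow> cost q w r ms \<le> cost q w r ms')"

text \<open>Agent i explores u: u is first visited (by anyone) through the move that brings
agent i to u (its invocation at the homebase, or an edge traversal).\<close>
definition agent_explores :: "'a \<Rightarrow> 'a move list \<Rightarrow> nat \<Rightarrow> 'a \<Rightarrow> bool" where
  "agent_explores r ms i u \<longleftrightarrow>
     (\<exists>k < length ms. i < length (pos_after r ms (Suc k)) \<and> pos_after r ms (Suc k) ! i = u
        \<and> u \<notin> visited r ms k)"

definition agent_enters :: "'a \<Rightarrow> 'a move list \<Rightarrow> nat \<Rightarrow> 'a set \<Rightarrow> bool" where
  "agent_enters r ms i S \<longleftrightarrow>
     (\<exists>k < length ms. \<exists>u. ms ! k = Traverse i u \<and> u \<in> S \<and> pos_after r ms k ! i \<notin> S)"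

end

theory Submission
  imports Defs
begin

text \<open>
  Suppose agent i enters T_v but explores no leaf of T_v. Every edge into T_v starts at the
  parent p of v, so deleting all moves of agent i with an endpoint in T_v yields a valid
  strategy in which agent i waits at p whenever it used to be inside T_v. It invokes the same
  agents and travels strictly less, because the entering move is deleted and weights are
  positive. It still explores the tree: outside T_v nothing changes, and every vertex x of T_v
  lies above a leaf first reached by another agent, whose walk from the root passes through x.
  This contradicts optimality.
\<close>

lemma walk_Nil [simp]: "\<not> walk E []"
  by (simp add: walk_def)

lemma walk_singleton [simp]: "walk E [a]"
  by (simp add: walk_def)

lemma walk_Cons_Cons: "walk E (a # b # p) \<longleftrightarrow> {a, b} \<in> E \<and> walk E (b # p)"
  unfolding walk_def by (auto simp: nth_Cons split: nat.splits)

lemma walk_append: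
  "walk E xs \<Longrightarrow> walk E ys \<Longrightarrow> {last xs, hd ys} \<in> E \<Longrightarrow> walk E (xs @ ys)"
proof (induction xs rule: induct_list012)
  case (2 x) then show ?case by (cases ys) (auto simp: walk_Cons_Cons)
qed (auto simp: walk_Cons_Cons)

lemma walk_snoc: "walk E xs \<Longrightarrow> {last xs, u} \<in> E \<Longrightarrow> walk E (xs @ [u])"
  by (simp add: walk_append)

lemma walk_append_tl:
  "walk E xs \<Longrightarrow> walk E ys \<Longrightarrow> last xs = hd ys \<Longrightarrow> walk E (xs @ tl ys)"
proof (induction xs rule: induct_list012)
  case (2 x) then show ?case by (cases ys) auto
qed (auto simp: walk_Cons_Cons)

lemma walk_take: "walk E p \<Longrightarrow> 0 < n \<Longrightarrow> walk E (take n p)"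
  unfolding walk_def by (auto simp: nth_take)

lemma walk_drop: "walk E p \<Longrightarrow> n < length p \<Longrightarrow> walk E (drop n p)"
  unfolding walk_def by (auto simp: nth_drop)

lemma walk_rev: "walk E p \<Longrightarrow> walk E (rev p)"
proof (induction p rule: induct_list012)
  case (3 x y zs)
  then have "walk E (rev (y # zs) @ [x])"
    by (intro walk_snoc) (auto simp: walk_Cons_Cons insert_commute)
  then show ?case by simp
qed auto

lemma walk_prefix_to_nth:
  assumes "walk E p" "j < length p"
  shows "walk E (take (Suc j) p) \<and> hd (take (Suc j) p) = hd p \<and> last (take (Suc j) p) = p ! j"
proof -
  have "last (take (Suc j) p) = p ! j" using assms(2) by (simp add: take_Suc_conv_app_nth)
  then show ?thesis using walk_take[OF assms(1), of "Suc j"] by simp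
qed

lemma exists_distinct_walk:
  "walk E p \<Longrightarrow> \<exists>q. walk E q \<and> distinct q \<and> hd q = hd p \<and> last q = last p \<and> set q \<subseteq> set p"
proof (induction p rule: length_induct)
  case (1 p)
  show ?case
  proof (cases "distinct p")
    case False
    then obtain xs ys zs c where p: "p = xs @ [c] @ ys @ [c] @ zs"
      using not_distinct_decomp by blast
    have "walk E (xs @ [c])"
      using walk_take[OF "1.prems", of "length xs + 1"] p by simp
    moreover have "walk E (c # zs)"
      using walk_drop[OF "1.prems", of "length xs + 1 + length ys"] p by simp
    ultimately have "walk E (xs @ c # zs)" using walk_append_tl by fastforce
    moreover have "length (xs @ c # zs) < length p" using p by simp
    moreover have "hd (xs @ c # zs) = hd p" "last (xs @ c # zs) = last p"
      using p by (cases xs; cases zs; simp)+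
    moreover have "set (xs @ c # zs) \<subseteq> set p" using p by auto
    ultimately show ?thesis using "1.IH" by (metis order_trans)
  qed (use "1.prems" in blast)
qed

lemma graph_edge_in_vertices: "graph V E \<Longrightarrow> {x, u} \<in> E \<Longrightarrow> x \<in> V \<and> u \<in> V"
  unfolding graph_def by (auto simp: doubleton_eq_iff)

lemma subtree_walk_through:
  "u \<in> subtree V E r v \<Longrightarrow> walk E P \<Longrightarrow> hd P = r \<Longrightarrow> last P = u \<Longrightarrow> v \<in> set P"
  by (simp add: subtree_def)

lemma subtree_subset: "subtree V E r v \<subseteq> V"
  by (auto simp: subtree_def)

lemma subtree_self: "v \<in> V \<Longrightarrow> v \<in> subtree V E r v"
  by (auto simp: subtree_def walk_def)

lemma subtree_root: "subtree V E r r = V"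
  by (auto simp: subtree_def walk_def hd_in_set)

lemma root_in_subtree: "r \<in> subtree V E r v \<Longrightarrow> v = r"
  unfolding subtree_def by (auto dest: spec[of _ "[r]"])

lemma subtree_trans:
  assumes "c \<in> subtree V E r b"
  shows "subtree V E r c \<subseteq> subtree V E r b"
proof
  fix u assume u: "u \<in> subtree V E r c"
  have "b \<in> set P" if P: "walk E P" "hd P = r" "last P = u" for P
  proof -
    obtain j where j: "j < length P" "P ! j = c"
      using subtree_walk_through[OF u P] by (auto simp: in_set_conv_nth)
    then have "b \<in> set (take (Suc j) P)"
      using subtree_walk_through[OF assms] walk_prefix_to_nth[OF P(1) j(1)] P(2) by metis
    then show ?thesis using set_take_subset by fastforce
  qed
  then show "u \<in> subtree V E r b" using u by (auto simp: subtree_def)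
qed

lemma subtree_antisym:
  assumes conn: "connected_graph V E" and r: "r \<in> V"
    and c: "c \<in> subtree V E r l" and l: "l \<in> subtree V E r c"
  shows "c = l"
proof -
  have "l \<in> V" using subtree_subset l by (rule subsetD)
  then obtain P0 where "walk E P0" "hd P0 = r" "last P0 = l"
    using conn r unfolding connected_graph_def by blast
  then obtain P where P: "walk E P" "distinct P" "hd P = r" "last P = l"
    using exists_distinct_walk by blast
  have "P \<noteq> []" using P(1) by auto
  then have last: "P ! (length P - 1) = l" "length P - 1 < length P"
    using P(4) by (simp_all add: last_conv_nth)
  obtain j where j: "j < length P" "P ! j = c"
    using subtree_walk_through[OF l P(1,3,4)] by (auto simp: in_set_conv_nth)
  then have "l \<in> set (take (Suc j) P)"
    using subtree_walk_through[OF c] walk_prefix_to_nth[OF P(1) j(1)] P(3) by metis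
  then obtain m where m: "m \<le> j" "P ! m = l"
    by (auto simp: in_set_conv_nth less_Suc_eq_le)
  then have "m = length P - 1"
    using nth_eq_iff_index_eq[OF P(2), of m "length P - 1"] last j(1) by simp
  then have "j = length P - 1" using m(1) j(1) by linarith
  then show ?thesis using j last by simp
qed

lemma edge_into_subtree:
  assumes "{x, u} \<in> E" "x \<in> V" "x \<notin> subtree V E r v" "u \<in> subtree V E r v"
  shows "u = v"
proof -
  obtain P where P: "walk E P" "hd P = r" "last P = x" "v \<notin> set P"
    using assms(2,3) by (auto simp: subtree_def)
  have "walk E (P @ [u])" using walk_snoc[OF P(1)] P(3) assms(1) by simp
  moreover have "hd (P @ [u]) = r" using P(1,2) by (cases P) auto
  ultimately have "v \<in> set (P @ [u])" using subtree_walk_through[OF assms(4), of "P @ [u]"] by simp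
  then show ?thesis using P by auto
qed

text \<open>Two distinct entrances would close a cycle through v.\<close>

lemma subtree_entrance_unique:
  assumes tree: "tree V E"
    and "{x, u} \<in> E" "x \<in> V" "x \<notin> subtree V E r v" "u \<in> subtree V E r v"
    and "{y, u'} \<in> E" "y \<in> V" "y \<notin> subtree V E r v" "u' \<in> subtree V E r v"
  shows "x = y"
proof (rule ccontr)
  assume "x \<noteq> y"
  have xv: "{x, v} \<in> E" and yv: "{y, v} \<in> E"
    using edge_into_subtree[OF assms(2-5)] edge_into_subtree[OF assms(6-9)] assms(2,6) by simp_all
  obtain P1 where P1: "walk E P1" "hd P1 = r" "last P1 = x" "v \<notin> set P1"
    using assms(3,4) by (auto simp: subtree_def)
  obtain P2 where P2: "walk E P2" "hd P2 = r" "last P2 = y" "v \<notin> set P2"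
    using assms(7,8) by (auto simp: subtree_def)
  have ne: "P1 \<noteq> []" "P2 \<noteq> []" using P1 P2 by auto
  define R where "R = rev P1 @ tl P2"
  have "walk E R" unfolding R_def
    using walk_append_tl[OF walk_rev[OF P1(1)] P2(1)] P1(2) P2(2) ne by (simp add: last_rev)
  moreover have "hd R = x" unfolding R_def using P1(3) ne by (simp add: hd_rev)
  moreover have "last R = y"
  proof (cases "tl P2 = []")
    case True
    then have "P2 = [r]" using P2(2) ne by (cases P2) auto
    then show ?thesis using True P1(2) P2(3) ne by (simp add: R_def last_rev)
  next
    case False
    then show ?thesis using P2(3) ne by (simp add: R_def last_tl)
  qed
  moreover have "v \<notin> set R"
    unfolding R_def using P1(4) P2(4) list.set_sel(2)[OF ne(2)] by auto
  ultimately obtain Q where Q: "walk E Q" "distinct Q" "hd Q = x" "last Q = y" "v \<notin> set Q"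
    using exists_distinct_walk by blast
  obtain z Q' where Q': "Q = x # z # Q'"
  proof (cases Q)
    case (Cons a Q1)
    with Q \<open>x \<noteq> y\<close> show ?thesis by (cases Q1) (auto intro: that)
  qed (use Q in simp)
  have "walk E (v # Q)" "distinct (v # Q)" "length (v # Q) \<ge> 3" "{last (v # Q), hd (v # Q)} \<in> E"
    using Q Q' xv yv by (auto simp: walk_Cons_Cons insert_commute)
  then have "has_cycle E" unfolding has_cycle_def by blast
  then show False using tree by (simp add: tree_def)
qed

lemma exists_leaf_in_subtree:
  assumes tree: "tree V E" and r: "r \<in> V" and x: "x \<in> V" "x \<noteq> r"
  shows "\<exists>l. is_leaf V E r l \<and> l \<in> subtree V E r x"
proof -
  have fin: "finite V" using tree by (simp add: tree_def graph_def)
  obtain l where l: "l \<in> subtree V E r x"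
    and min: "\<And>y. y \<in> subtree V E r x \<Longrightarrow> card (subtree V E r l) \<le> card (subtree V E r y)"
    using ex_has_least_nat[of "\<lambda>y. y \<in> subtree V E r x" x "\<lambda>y. card (subtree V E r y)"]
      subtree_self[OF x(1)] by blast
  have "l \<in> V" using subtree_subset l by (rule subsetD)
  moreover have "l \<noteq> r" using l x(2) root_in_subtree by metis
  moreover have "children V E r l = {}"
  proof (rule ccontr)
    assume "children V E r l \<noteq> {}"
    then obtain c where c: "c \<in> subtree V E r l" "c \<noteq> l" by (auto simp: children_def)
    have "l \<notin> subtree V E r c"
      using subtree_antisym[OF _ r c(1)] tree c(2) by (auto simp: tree_def)
    then have "subtree V E r c \<subset> subtree V E r l"
      using subtree_trans[OF c(1)] subtree_self[OF \<open>l \<in> V\<close>] by blast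
    then have "card (subtree V E r c) < card (subtree V E r l)"
      using fin subtree_subset by (metis psubset_card_mono rev_finite_subset)
    moreover have "c \<in> subtree V E r x" using subtree_trans[OF l] c(1) by blast
    ultimately show False using min[of c] by simp
  qed
  ultimately show ?thesis using l by (auto simp: is_leaf_def)
qed

section \<open>Runs from an arbitrary configuration\<close>

definition pos_from :: "'a \<Rightarrow> 'a list \<Rightarrow> 'a move list \<Rightarrow> nat \<Rightarrow> 'a list" where
  "pos_from r pos ms k = foldl (step r) pos (take k ms)"

definition move_cost :: "('a set \<Rightarrow> real) \<Rightarrow> 'a list \<Rightarrow> 'a move \<Rightarrow> real" where
  "move_cost w pos m = (case m of Invoke \<Rightarrow> 0 | Traverse i u \<Rightarrow> w {pos ! i, u})"

fun valid_from :: "'a set set \<Rightarrow> 'a \<Rightarrow> 'a list \<Rightarrow> 'a move list \<Rightarrow> bool" where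
  "valid_from E r pos [] = True"
| "valid_from E r pos (m # ms) = (valid_move E pos m \<and> valid_from E r (step r pos m) ms)"

fun dist_from :: "('a set \<Rightarrow> real) \<Rightarrow> 'a \<Rightarrow> 'a list \<Rightarrow> 'a move list \<Rightarrow> real" where
  "dist_from w r pos [] = 0"
| "dist_from w r pos (m # ms) = move_cost w pos m + dist_from w r (step r pos m) ms"

fun configs_from :: "'a \<Rightarrow> 'a list \<Rightarrow> 'a move list \<Rightarrow> 'a list set" where
  "configs_from r pos [] = {pos}"
| "configs_from r pos (m # ms) = insert pos (configs_from r (step r pos m) ms)"

lemma pos_from_0 [simp]: "pos_from r pos ms 0 = pos"
  by (simp add: pos_from_def)

lemma pos_from_Cons_Suc [simp]: "pos_from r pos (m # ms) (Suc k) = pos_from r (step r pos m) ms k"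
  by (simp add: pos_from_def)

lemma valid_from_iff:
  "valid_from E r pos ms \<longleftrightarrow> (\<forall>k<length ms. valid_move E (pos_from r pos ms k) (ms ! k))"
  by (induction ms arbitrary: pos) (auto simp: All_less_Suc2)

lemma dist_from_eq: "dist_from w r pos ms = (\<Sum>k<length ms. move_cost w (pos_from r pos ms k) (ms ! k))"
  by (induction ms arbitrary: pos) (simp_all del: sum.lessThan_Suc add: sum.lessThan_Suc_shift)

lemma configs_from_eq: "configs_from r pos ms = pos_from r pos ms ` {..length ms}"
  by (induction ms arbitrary: pos) (auto simp: atMost_Suc_eq_insert_0 image_image)

lemma pos_after_eq_pos_from: "pos_after r ms k = pos_from r [] ms k"
  by (simp add: pos_from_def pos_after_def)

lemma pos_after_Suc: "k < length ms \<Longrightarrow> pos_after r ms (Suc k) = step r (pos_after r ms k) (ms ! k)"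
  by (simp add: pos_after_def take_Suc_conv_app_nth)

lemma valid_strategy_iff_valid_from: "valid_strategy E r ms \<longleftrightarrow> valid_from E r [] ms"
  by (simp add: valid_strategy_def valid_from_iff pos_after_eq_pos_from)

lemma total_distance_eq_dist_from: "total_distance w r ms = dist_from w r [] ms"
  unfolding total_distance_def dist_from_eq move_cost_def pos_after_eq_pos_from ..

lemma visited_eq_configs_from: "visited r ms (length ms) = \<Union> (set ` configs_from r [] ms)"
  by (simp add: visited_def configs_from_eq pos_after_eq_pos_from image_image)

definition agent_visits :: "'a \<Rightarrow> 'a move list \<Rightarrow> nat \<Rightarrow> nat \<Rightarrow> 'a \<Rightarrow> bool" where
  "agent_visits r ms j t y \<longleftrightarrow> (\<exists>t'\<le>t. j < length (pos_after r ms t') \<and> pos_after r ms t' ! j = y)"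

lemma visited_iff_agent_visits: "y \<in> visited r ms t \<longleftrightarrow> (\<exists>j. agent_visits r ms j t y)"
  by (auto simp: visited_def agent_visits_def in_set_conv_nth)

lemma agent_visits_mono: "agent_visits r ms j t y \<Longrightarrow> t \<le> t' \<Longrightarrow> agent_visits r ms j t' y"
  by (auto simp: agent_visits_def intro: order_trans)

lemma agent_walk_from_root:
  assumes valid: "valid_strategy E r ms"
  shows "t \<le> length ms \<Longrightarrow> j < length (pos_after r ms t) \<Longrightarrow>
    \<exists>P. walk E P \<and> hd P = r \<and> last P = pos_after r ms t ! j \<and> (\<forall>y\<in>set P. agent_visits r ms j t y)"
proof (induction t arbitrary: j)
  case 0
  then show ?case by (simp add: pos_after_def)
next
  case (Suc t)
  let ?pos = "pos_after r ms t" and ?pos' = "pos_after r ms (Suc t)"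
  have t: "t < length ms" using Suc.prems(1) by simp
  have step: "?pos' = step r ?pos (ms ! t)" using pos_after_Suc[OF t] .
  have move: "valid_move E ?pos (ms ! t)" using valid t by (simp add: valid_strategy_def)
  have earlier: "agent_visits r ms j t y \<Longrightarrow> agent_visits r ms j (Suc t) y" for y
    using agent_visits_mono by fastforce
  have now: "agent_visits r ms j (Suc t) (?pos' ! j)"
    using Suc.prems(2) by (auto simp: agent_visits_def)
  consider (stays) "j < length ?pos" "?pos' ! j = ?pos ! j"
    | (invoked) "?pos' ! j = r"
    | (moves) u where "j < length ?pos" "{?pos ! j, u} \<in> E" "?pos' ! j = u"
  proof (cases "ms ! t")
    case Invoke
    then show thesis using that(1,2) Suc.prems(2) step
      by (cases "j < length ?pos") (auto simp: nth_append)
  next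
    case (Traverse a u)
    then show thesis using that(1,3) Suc.prems(2) step move
      by (cases "a = j") auto
  qed
  then show ?case
  proof cases
    case stays
    then obtain P where "walk E P" "hd P = r" "last P = ?pos ! j" "\<forall>y\<in>set P. agent_visits r ms j t y"
      using Suc.IH t by auto
    then show ?thesis using stays earlier by auto
  next
    case invoked
    then show ?thesis using now by (intro exI[of _ "[r]"]) auto
  next
    case (moves u)
    then obtain P where P: "walk E P" "hd P = r" "last P = ?pos ! j" "\<forall>y\<in>set P. agent_visits r ms j t y"
      using Suc.IH t by auto
    have "walk E (P @ [u])" using walk_snoc[OF P(1)] P(3) moves(2) by simp
    moreover have "hd (P @ [u]) = r" using P(1,2) by (cases P) auto
    ultimately show ?thesis using P moves(3) earlier now by (intro exI[of _ "P @ [u]"]) auto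
  qed
qed

lemma explored_by_some_agent:
  assumes "x \<in> visited r ms (length ms)"
  shows "\<exists>a. agent_explores r ms a x"
proof -
  obtain t where t: "t \<le> length ms" "x \<in> visited r ms t" "\<forall>t'<t. x \<notin> visited r ms t'"
    using ex_least_nat_le[of "\<lambda>t. x \<in> visited r ms t", OF assms] by blast
  have "x \<notin> visited r ms 0" by (simp add: visited_def pos_after_def)
  then obtain k where k: "t = Suc k" using t(2) by (cases t) auto
  have unvisited: "x \<notin> visited r ms k" using t(3) k by simp
  then have "x \<in> set (pos_after r ms (Suc k))"
    using t(2) k by (auto simp: visited_def atMost_Suc)
  then obtain a where "a < length (pos_after r ms (Suc k))" "pos_after r ms (Suc k) ! a = x"
    by (auto simp: in_set_conv_nth)
  moreover have "k < length ms" using t(1) k by simp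
  ultimately have "agent_explores r ms a x" using unvisited by (auto simp: agent_explores_def)
  then show ?thesis ..
qed

section \<open>Pruning the moves of one agent\<close>

definition retract :: "'a set \<Rightarrow> 'a \<Rightarrow> 'a \<Rightarrow> 'a" where
  "retract T p x = (if x \<in> T then p else x)"

definition retract_agent :: "nat \<Rightarrow> 'a set \<Rightarrow> 'a \<Rightarrow> 'a list \<Rightarrow> 'a list" where
  "retract_agent i T p pos = pos[i := retract T p (pos ! i)]"

definition touches :: "nat \<Rightarrow> 'a set \<Rightarrow> 'a list \<Rightarrow> 'a move \<Rightarrow> bool" where
  "touches i T pos m = (case m of Invoke \<Rightarrow> False | Traverse j u \<Rightarrow> j = i \<and> (u \<in> T \<or> pos ! j \<in> T))"

fun prune :: "'a \<Rightarrow> nat \<Rightarrow> 'a set \<Rightarrow> 'a list \<Rightarrow> 'a move list \<Rightarrow> 'a move list" where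
  "prune r i T pos [] = []"
| "prune r i T pos (m # ms) =
     (if touches i T pos m then prune r i T (step r pos m) ms else m # prune r i T (step r pos m) ms)"

lemma retract_agent_Nil [simp]: "retract_agent i T p [] = []"
  by (simp add: retract_agent_def)

lemma length_retract_agent [simp]: "length (retract_agent i T p pos) = length pos"
  by (simp add: retract_agent_def)

lemma nth_retract_agent:
  "j < length pos \<Longrightarrow> retract_agent i T p pos ! j = (if j = i then retract T p (pos ! j) else pos ! j)"
  by (simp add: retract_agent_def)

lemma num_agents_prune: "num_agents (prune r i T pos ms) = num_agents ms"
  by (induction ms arbitrary: pos) (auto simp: num_agents_def touches_def split: move.splits)

text \<open>
  If every edge into T starts at p, then dropping all moves of agent i with an endpoint in T
  leaves agent i parked at p while it would have been inside T: the configurations of the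
  pruned strategy are the original ones with agent i retracted to p.
\<close>

locale single_entrance =
  fixes E :: "'a set set" and r :: 'a and T :: "'a set" and p :: 'a
  assumes root_outside: "r \<notin> T"
    and entrance: "\<And>x u. {x, u} \<in> E \<Longrightarrow> x \<notin> T \<Longrightarrow> u \<in> T \<Longrightarrow> x = p"
begin

lemma retract_agent_step_touching:
  assumes "valid_move E pos m" "touches i T pos m"
  shows "retract_agent i T p (step r pos m) = retract_agent i T p pos"
proof -
  obtain u where m: "m = Traverse i u" and i: "i < length pos" and e: "{pos ! i, u} \<in> E"
    and inside: "u \<in> T \<or> pos ! i \<in> T"
    using assms by (cases m) (auto simp: touches_def)
  have "retract T p u = retract T p (pos ! i)"
  proof (cases "u \<in> T"; cases "pos ! i \<in> T")
    assume "u \<in> T" "pos ! i \<notin> T"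
    then show ?thesis using entrance[OF e] by (simp add: retract_def)
  next
    assume "u \<notin> T" "pos ! i \<in> T"
    then show ?thesis using entrance[of u "pos ! i"] e by (simp add: retract_def insert_commute)
  qed (use inside in \<open>auto simp: retract_def\<close>)
  then show ?thesis using m i by (simp add: retract_agent_def)
qed

lemma retract_agent_step:
  assumes "valid_move E pos m" "\<not> touches i T pos m"
  shows "step r (retract_agent i T p pos) m = retract_agent i T p (step r pos m)"
    and "valid_move E (retract_agent i T p pos) m"
    and "move_cost w (retract_agent i T p pos) m = move_cost w pos m"
proof -
  have "step r (retract_agent i T p pos) m = retract_agent i T p (step r pos m) \<and>
    valid_move E (retract_agent i T p pos) m \<and> move_cost w (retract_agent i T p pos) m = move_cost w pos m"
  proof (cases m)
    case Invoke
    consider "i < length pos" | "i = length pos" | "length pos < i" by linarith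
    then have "retract_agent i T p (pos @ [r]) = retract_agent i T p pos @ [r]"
    proof cases
      case 3
      then show ?thesis by (simp add: retract_agent_def list_update_beyond)
    qed (use root_outside in
          \<open>auto simp: retract_agent_def retract_def nth_append list_update_append list_update_beyond\<close>)
    then show ?thesis using Invoke by (simp add: move_cost_def)
  next
    case (Traverse j u)
    then have "j < length pos" "{pos ! j, u} \<in> E" "j = i \<longrightarrow> u \<notin> T \<and> pos ! j \<notin> T"
      using assms by (auto simp: touches_def)
    then show ?thesis using Traverse
      by (cases "j = i") (simp_all add: retract_agent_def retract_def move_cost_def list_update_swap)
  qed
  then show "step r (retract_agent i T p pos) m = retract_agent i T p (step r pos m)"
    and "valid_move E (retract_agent i T p pos) m"
    and "move_cost w (retract_agent i T p pos) m = move_cost w pos m"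
    by simp_all
qed

lemma valid_from_prune:
  "valid_from E r pos ms \<Longrightarrow> valid_from E r (retract_agent i T p pos) (prune r i T pos ms)"
proof (induction ms arbitrary: pos)
  case (Cons m ms)
  then have move: "valid_move E pos m" and rest: "valid_from E r (step r pos m) ms" by simp_all
  show ?case
  proof (cases "touches i T pos m")
    case True
    then show ?thesis using Cons.IH[OF rest] retract_agent_step_touching[OF move True] by simp
  next
    case False
    then show ?thesis using Cons.IH[OF rest] retract_agent_step[OF move False] by simp
  qed
qed simp

lemma configs_from_prune:
  "valid_from E r pos ms \<Longrightarrow>
    configs_from r (retract_agent i T p pos) (prune r i T pos ms) = retract_agent i T p ` configs_from r pos ms"
proof (induction ms arbitrary: pos)
  case (Cons m ms)
  then have move: "valid_move E pos m" and IH: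
    "configs_from r (retract_agent i T p (step r pos m)) (prune r i T (step r pos m) ms)
      = retract_agent i T p ` configs_from r (step r pos m) ms"
    by simp_all
  show ?case
  proof (cases "touches i T pos m")
    case True
    have "step r pos m \<in> configs_from r (step r pos m) ms"
      by (simp add: configs_from_eq image_iff) (metis atMost_iff le0 pos_from_0)
    then have "retract_agent i T p pos \<in> retract_agent i T p ` configs_from r (step r pos m) ms"
      using retract_agent_step_touching[OF move True] by (metis image_eqI)
    then show ?thesis using True IH retract_agent_step_touching[OF move True] by (simp add: insert_absorb)
  next
    case False
    then show ?thesis using IH retract_agent_step[OF move False] by simp
  qed
qed simp

lemma dist_from_prune_le:
  "valid_from E r pos ms \<Longrightarrow> \<forall>e\<in>E. 0 \<le> w e \<Longrightarrow>
    dist_from w r (retract_agent i T p pos) (prune r i T pos ms) \<le> dist_from w r pos ms"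
proof (induction ms arbitrary: pos)
  case (Cons m ms)
  then have move: "valid_move E pos m" and rest: "valid_from E r (step r pos m) ms" by simp_all
  note IH = Cons.IH[OF rest Cons.prems(2)]
  show ?case
  proof (cases "touches i T pos m")
    case True
    then have "0 \<le> move_cost w pos m"
      using move Cons.prems(2) by (cases m) (auto simp: move_cost_def)
    then show ?thesis using True IH retract_agent_step_touching[OF move True] by simp
  next
    case False
    then show ?thesis using IH retract_agent_step(1,3)[OF move False] by simp
  qed
qed simp

lemma dist_from_prune_less:
  "valid_from E r pos ms \<Longrightarrow> \<forall>e\<in>E. 0 < w e \<Longrightarrow>
    k < length ms \<Longrightarrow> touches i T (pos_from r pos ms k) (ms ! k) \<Longrightarrow>
    dist_from w r (retract_agent i T p pos) (prune r i T pos ms) < dist_from w r pos ms"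
proof (induction ms arbitrary: pos k)
  case (Cons m ms)
  then have move: "valid_move E pos m" and rest: "valid_from E r (step r pos m) ms"
    and nonneg: "\<forall>e\<in>E. 0 \<le> w e"
    by (auto simp: less_imp_le)
  show ?case
  proof (cases "touches i T pos m")
    case True
    then have "0 < move_cost w pos m"
      using move Cons.prems(2) by (cases m) (auto simp: move_cost_def touches_def)
    then show ?thesis
      using True dist_from_prune_le[OF rest nonneg, of i] retract_agent_step_touching[OF move True] by simp
  next
    case False
    then obtain k' where "k = Suc k'" "k' < length ms" "touches i T (pos_from r (step r pos m) ms k') (ms ! k')"
      using Cons.prems(3,4) by (cases k) auto
    then show ?thesis
      using False Cons.IH[OF rest Cons.prems(2)] retract_agent_step(1,3)[OF move False] by simp
  qed
qed simp

lemma valid_strategy_prune: "valid_strategy E r ms \<Longrightarrow> valid_strategy E r (prune r i T [] ms)"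
  using valid_from_prune[of "[]" ms i] by (simp add: valid_strategy_iff_valid_from)

lemma visited_prune:
  assumes "valid_strategy E r ms" "agent_visits r ms j (length ms) x" "j \<noteq> i \<or> x \<notin> T"
  shows "x \<in> visited r (prune r i T [] ms) (length (prune r i T [] ms))"
proof -
  obtain t where t: "t \<le> length ms" "j < length (pos_after r ms t)" "pos_after r ms t ! j = x"
    using assms(2) by (auto simp: agent_visits_def)
  have "retract_agent i T p (pos_after r ms t) \<in> configs_from r [] (prune r i T [] ms)"
    using configs_from_prune[of "[]" ms i] assms(1) t(1)
    by (simp add: valid_strategy_iff_valid_from configs_from_eq pos_after_eq_pos_from)
  moreover have "retract_agent i T p (pos_after r ms t) ! j = x"
    using t assms(3) by (auto simp: nth_retract_agent retract_def)
  ultimately show ?thesis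
    using t(2) unfolding visited_eq_configs_from by (metis UN_iff length_retract_agent nth_mem)
qed

lemma cost_prune_less:
  assumes "valid_strategy E r ms" "\<forall>e\<in>E. 0 < w e" "agent_enters r ms i T"
  shows "cost q w r (prune r i T [] ms) < cost q w r ms"
proof -
  obtain k u where k: "k < length ms" "ms ! k = Traverse i u" "u \<in> T"
    using assms(3) by (auto simp: agent_enters_def)
  then have "touches i T (pos_from r [] ms k) (ms ! k)" by (simp add: touches_def)
  then have "dist_from w r [] (prune r i T [] ms) < dist_from w r [] ms"
    using dist_from_prune_less[of "[]" ms w k i] assms(1,2) k(1)
    by (simp add: valid_strategy_iff_valid_from)
  then show ?thesis by (simp add: cost_def total_distance_eq_dist_from num_agents_prune)
qed

text \<open>
  A vertex x of T stays explored: some vertex below x that agent i does not explore is first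
  reached by another agent, whose walk from the root passes through x.
\<close>

lemma explores_graph_prune:
  assumes valid: "valid_strategy E r ms" and explores: "explores_graph V r ms"
    and unexplored: "\<forall>y\<in>T. \<exists>l\<in>subtree V E r y. \<not> agent_explores r ms i l"
  shows "explores_graph V r (prune r i T [] ms)"
  unfolding explores_graph_def
proof
  fix x assume "x \<in> V"
  show "x \<in> visited r (prune r i T [] ms) (length (prune r i T [] ms))"
  proof (cases "x \<in> T")
    case False
    have "x \<in> visited r ms (length ms)"
      using explores \<open>x \<in> V\<close> by (auto simp: explores_graph_def)
    then obtain j where "agent_visits r ms j (length ms) x"
      by (auto simp: visited_iff_agent_visits)
    then show ?thesis using visited_prune[OF valid] False by blast
  next
    case True
    then obtain l where l: "l \<in> subtree V E r x" "\<not> agent_explores r ms i l"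
      using unexplored by blast
    have "l \<in> visited r ms (length ms)"
      using subsetD[OF subtree_subset l(1)] explores by (auto simp: explores_graph_def)
    then obtain a where a: "agent_explores r ms a l"
      using explored_by_some_agent by metis
    then obtain k where k: "k < length ms" "a < length (pos_after r ms (Suc k))"
      "pos_after r ms (Suc k) ! a = l"
      by (auto simp: agent_explores_def)
    then obtain P where "walk E P" "hd P = r" "last P = l" "\<forall>y\<in>set P. agent_visits r ms a (Suc k) y"
      using agent_walk_from_root[OF valid, of "Suc k" a] by auto
    then have "agent_visits r ms a (Suc k) x"
      using subtree_walk_through[OF l(1)] by blast
    then have "agent_visits r ms a (length ms) x"
      using agent_visits_mono k(1) by (metis Suc_leI)
    moreover have "a \<noteq> i" using a l(2) by blast
    ultimately show ?thesis using visited_prune[OF valid] by blast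
  qed
qed

end

lemma single_entrance_subtree:
  assumes tree: "tree V E" and edge: "{x, u} \<in> E"
    and x: "x \<notin> subtree V E r v" and u: "u \<in> subtree V E r v"
  shows "single_entrance E r (subtree V E r v) x"
proof
  have graph: "graph V E" using tree by (simp add: tree_def)
  then have "x \<in> V" using graph_edge_in_vertices[OF _ edge] by simp
  show "r \<notin> subtree V E r v"
  proof
    assume "r \<in> subtree V E r v"
    then have "v = r" by (rule root_in_subtree)
    then show False using x \<open>x \<in> V\<close> by (simp add: subtree_root)
  qed
  fix y u' assume y: "{y, u'} \<in> E" "y \<notin> subtree V E r v" "u' \<in> subtree V E r v"
  have "y \<in> V" using graph_edge_in_vertices[OF graph y(1)] by simp
  then show "y = x"
    using subtree_entrance_unique[OF tree y(1) _ y(2,3) edge \<open>x \<in> V\<close> x u] by simp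
qed

theorem mainTheorem4:
  fixes V :: "'a set" and E :: "'a set set" and w :: "'a set \<Rightarrow> real"
    and r :: 'a and q :: real and ms :: "'a move list" and i :: nat and v :: 'a
  assumes "tree V E"
    and "\<forall>e\<in>E. w e > 0"
    and "r \<in> V"
    and "q \<ge> 0"
    and "cost_optimal V E w r q ms"
    and "v \<in> V"
    and "agent_enters r ms i (subtree V E r v)"
  shows "\<exists>u. is_leaf V E r u \<and> u \<in> subtree V E r v \<and> agent_explores r ms i u"
proof (rule ccontr)
  assume no_leaf: "\<not> ?thesis"
  define T where "T = subtree V E r v"
  have valid: "valid_strategy E r ms" and explores: "explores_graph V r ms"
    using assms(5) by (simp_all add: cost_optimal_def)
  obtain k u where k: "k < length ms" "ms ! k = Traverse i u" "u \<in> T" "pos_after r ms k ! i \<notin> T"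
    using assms(7) by (auto simp: agent_enters_def T_def)
  then have "{pos_after r ms k ! i, u} \<in> E"
    using valid by (auto simp: valid_strategy_def)
  then interpret single_entrance E r T "pos_after r ms k ! i"
    using single_entrance_subtree[OF assms(1)] k(3,4) by (simp add: T_def)
  have "\<forall>y\<in>T. \<exists>l\<in>subtree V E r y. \<not> agent_explores r ms i l"
  proof
    fix y assume y: "y \<in> T"
    then have "y \<in> V" "y \<noteq> r"
      using subsetD[OF subtree_subset] root_outside unfolding T_def by auto
    then obtain l where "is_leaf V E r l" and l: "l \<in> subtree V E r y"
      using exists_leaf_in_subtree[OF assms(1,3)] by blast
    moreover have "l \<in> T"
      using subtree_trans[OF y[unfolded T_def]] l unfolding T_def by (rule subsetD)
    ultimately show "\<exists>l\<in>subtree V E r y. \<not> agent_explores r ms i l" using no_leaf T_def by blast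
  qed
  then have "cost q w r ms \<le> cost q w r (prune r i T [] ms)"
    using assms(5) valid_strategy_prune[OF valid] explores_graph_prune[OF valid explores]
    by (simp add: cost_optimal_def)
  moreover have "cost q w r (prune r i T [] ms) < cost q w r ms"
    using cost_prune_less[OF valid assms(2)] assms(7) by (simp add: T_def)
  ultimately show False by simp
qed

end
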